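(* Let $X_1,\ldots,X_q\in\{-1,0,1\}$ be i.i.d. random variables with mean $\mu\ne0$. Then for every $\epsilon$ with $0<\epsilon\le\frac{\min(\Pr(X_i=1),\Pr(X_i=-1))}{2|\mu|}$, $$\Pr\left(\left|\frac1{q|\mu|}\sum_{i=1}^qX_i-\frac{\mu}{|\mu|}\right|\ge\epsilon\right)\le4e^{-\frac{q\epsilon^2|\mu|^2}{12\Pr(X_i\ne0)}}.$$ *)

theory Defs
  imports "HOL-Probability.Probability"
begin

end

theory Submission imports Defs begin

text \<open>
  Centre the sum S at q\<mu> and apply the exponential Chernoff bound to both tails. The point is the
  moment generating function of a single centred variable: since X^2 is the indicator of X \<noteq> 0
  and exp y \<le> 1 + y + y^2 for \<bar>y\<bar> \<le> 1, for \<bar>\<lambda>\<bar> \<le> 1 it is at most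
  exp (-\<lambda>\<mu>) (1 + \<lambda>\<mu> + \<lambda>^2 p) \<le> exp (\<lambda>^2 p), where p = Pr(X \<noteq> 0), rather than the
  exp (\<lambda>^2/2) of Hoeffding's lemma. Hence Pr(\<bar>S - q\<mu>\<bar> \<ge> t) \<le> 2 exp (-\<lambda>t + q\<lambda>^2 p), and
  \<lambda> = t/(2qp) gives 2 exp (-t^2/(4qp)). For t = \<epsilon>q\<bar>\<mu>\<bar> the hypothesis on \<epsilon> ensures \<lambda> \<le> 1.
\<close>

lemma exp_bound_abs:
  fixes x :: real
  assumes "\<bar>x\<bar> \<le> 1"
  shows "exp x \<le> 1 + x + x\<^sup>2"
proof (cases "x \<ge> 0")
  case True
  then show ?thesis using exp_bound[of x] assms by auto
next
  case False
  have "1 - x \<le> exp (-x)" using exp_ge_add_one_self[of "-x"] by simp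
  then have "exp x \<le> 1 / (1 - x)"
    using False by (simp add: exp_minus field_simps)
  also have "\<dots> \<le> 1 + x + x\<^sup>2"
  proof -
    have "(1 + x + x\<^sup>2) * (1 - x) = 1 - x ^ 3" by (simp add: algebra_simps power2_eq_square power3_eq_cube)
    moreover have "x ^ 3 < 0" using False by (simp add: power_less_zero_eq)
    ultimately show ?thesis using False by (simp add: divide_le_eq)
  qed
  finally show ?thesis .
qed

lemma nn_integral_comp_eq_if_distr_eq:
  assumes "X \<in> measurable M N" "Y \<in> measurable M N" "distr M N X = distr M N Y"
    and "f \<in> borel_measurable N"
  shows "(\<integral>\<^sup>+x. f (X x) \<partial>M) = (\<integral>\<^sup>+x. f (Y x) \<partial>M)"
  using assms nn_integral_distr[of X M N f] nn_integral_distr[of Y M N f] by simp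

lemma (in prob_space) nn_integral_exp_centered_ternary_le:
  assumes [measurable]: "random_variable borel Y"
    and vals: "\<And>x. x \<in> space M \<Longrightarrow> Y x \<in> {-1, 0, 1}"
    and "\<bar>l\<bar> \<le> 1"
  shows "(\<integral>\<^sup>+x. ennreal (exp (l * (Y x - expectation Y))) \<partial>M)
           \<le> ennreal (exp (l\<^sup>2 * prob {x \<in> space M. Y x \<noteq> 0}))"
proof -
  define \<mu> where "\<mu> = expectation Y"
  define p where "p = prob {x \<in> space M. Y x \<noteq> 0}"
  define g where "g x = exp (-l * \<mu>) * (1 + l * Y x + l\<^sup>2 * indicator {x \<in> space M. Y x \<noteq> 0} x)" for x
  have [simp]: "{x \<in> space M. Y x \<noteq> 0} \<in> events" by measurable
  have integrable_Y: "integrable M Y"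
    by (rule integrable_const_bound[where B=1]) (use vals in fastforce)+
  have exp_le_g: "exp (l * (Y x - \<mu>)) \<le> g x" if "x \<in> space M" for x
  proof -
    have "\<bar>l * Y x\<bar> \<le> 1" using vals[OF that] assms(3) by auto
    then have "exp (l * Y x) \<le> 1 + l * Y x + (l * Y x)\<^sup>2" by (rule exp_bound_abs)
    also have "(l * Y x)\<^sup>2 = l\<^sup>2 * indicator {x \<in> space M. Y x \<noteq> 0} x"
      using vals[OF that] that by (auto simp: power_mult_distrib)
    finally show ?thesis
      unfolding g_def by (simp add: right_diff_distrib exp_diff exp_minus field_simps)
  qed
  have "integral\<^sup>L M g = exp (-l * \<mu>) * (1 + l * \<mu> + l\<^sup>2 * p)"
    unfolding g_def \<mu>_def p_def using integrable_Y by (simp add: prob_space emeasure_eq_measure)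
  also have "\<dots> \<le> exp (-l * \<mu>) * exp (l * \<mu> + l\<^sup>2 * p)"
    by (intro mult_left_mono) (auto simp: add.assoc exp_ge_add_one_self)
  also have "\<dots> = exp (l\<^sup>2 * p)" by (simp flip: exp_add)
  finally have integral_g: "integral\<^sup>L M g \<le> exp (l\<^sup>2 * p)" .
  have "(\<integral>\<^sup>+x. ennreal (exp (l * (Y x - \<mu>))) \<partial>M) \<le> (\<integral>\<^sup>+x. ennreal (g x) \<partial>M)"
    by (intro nn_integral_mono ennreal_leI exp_le_g)
  also have "\<dots> = ennreal (integral\<^sup>L M g)"
    using integrable_Y exp_le_g
    by (intro nn_integral_eq_integral AE_I2)
       (auto simp: g_def emeasure_eq_measure intro: order_trans[OF exp_ge_zero])
  also have "\<dots> \<le> ennreal (exp (l\<^sup>2 * p))"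
    using integral_g by (rule ennreal_leI)
  finally show ?thesis unfolding \<mu>_def p_def .
qed

lemma (in prob_space) Chernoff_ineq_indep_sum_ge:
  assumes "finite I" and indep: "indep_vars (\<lambda>_. borel) X I" and "l > 0"
    and mgf: "\<And>i. i \<in> I \<Longrightarrow> (\<integral>\<^sup>+x. ennreal (exp (l * (X i x - c i))) \<partial>M) \<le> ennreal (exp (v i))"
  shows "prob {x \<in> space M. (\<Sum>i\<in>I. X i x - c i) \<ge> t} \<le> exp (-l * t + (\<Sum>i\<in>I. v i))"
proof -
  have [measurable]: "random_variable borel (X i)" if "i \<in> I" for i
    using indep that unfolding indep_vars_def by blast
  have "ennreal (prob {x \<in> space M. (\<Sum>i\<in>I. X i x - c i) \<ge> t})
          \<le> ennreal (exp (-l * t)) * (\<integral>\<^sup>+x\<in>space M. exp (l * (\<Sum>i\<in>I. X i x - c i)) \<partial>M)"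
    unfolding emeasure_eq_measure[symmetric] using \<open>l > 0\<close>
    by (intro Chernoff_ineq_nn_integral_ge) auto
  also have "(\<integral>\<^sup>+x\<in>space M. exp (l * (\<Sum>i\<in>I. X i x - c i)) \<partial>M)
               = (\<integral>\<^sup>+x. (\<Prod>i\<in>I. ennreal (exp (l * (X i x - c i)))) \<partial>M)"
    by (intro nn_integral_cong) (simp add: sum_distrib_left exp_sum \<open>finite I\<close> prod_ennreal)
  also have "\<dots> = (\<Prod>i\<in>I. \<integral>\<^sup>+x. ennreal (exp (l * (X i x - c i))) \<partial>M)"
    by (intro indep_vars_nn_integral \<open>finite I\<close> indep_vars_compose2[OF indep]) auto
  also have "ennreal (exp (-l * t)) * \<dots> \<le> ennreal (exp (-l * t)) * (\<Prod>i\<in>I. ennreal (exp (v i)))"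
    by (intro mult_left_mono prod_mono_ennreal mgf) auto
  also have "\<dots> = ennreal (exp (-l * t + (\<Sum>i\<in>I. v i)))"
    by (simp only: prod_ennreal exp_add exp_sum[OF \<open>finite I\<close>] ennreal_mult prod_nonneg exp_ge_zero)
  finally show ?thesis by (subst (asm) ennreal_le_iff) auto
qed

lemma (in prob_space) prob_abs_sum_iid_ternary_dev_ge_le:
  assumes "finite I" and indep: "indep_vars (\<lambda>_. borel) X I"
    and [measurable]: "random_variable borel Y"
    and distr_eq: "\<And>i. i \<in> I \<Longrightarrow> distr M borel (X i) = distr M borel Y"
    and vals: "\<And>x. x \<in> space M \<Longrightarrow> Y x \<in> {-1, 0, 1}"
    and "0 < t" "t \<le> 2 * real (card I) * prob {x \<in> space M. Y x \<noteq> 0}"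
  shows "prob {x \<in> space M. \<bar>(\<Sum>i\<in>I. X i x) - real (card I) * expectation Y\<bar> \<ge> t}
           \<le> 2 * exp (- t\<^sup>2 / (4 * real (card I) * prob {x \<in> space M. Y x \<noteq> 0}))"
proof -
  define \<mu> where "\<mu> = expectation Y"
  define p where "p = prob {x \<in> space M. Y x \<noteq> 0}"
  define n where "n = real (card I)"
  define l where "l = t / (2 * n * p)"
  have "n * p > 0" using assms(6,7) by (simp add: n_def p_def)
  then have l: "0 < l" "l \<le> 1" using assms(6,7) by (simp_all add: l_def n_def p_def)
  have [measurable]: "random_variable borel (X i)" if "i \<in> I" for i
    using indep that unfolding indep_vars_def by blast
  have tail: "prob {x \<in> space M. (\<Sum>i\<in>I. s * X i x - s * \<mu>) \<ge> t} \<le> exp (-l * t + n * l\<^sup>2 * p)"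
    if s: "\<bar>s\<bar> = 1" for s
  proof -
    have indep_s: "indep_vars (\<lambda>_. borel) (\<lambda>i x. s * X i x) I"
      by (rule indep_vars_compose2[OF indep]) measurable
    have mgf: "(\<integral>\<^sup>+x. ennreal (exp (l * (s * X i x - s * \<mu>))) \<partial>M) \<le> ennreal (exp (l\<^sup>2 * p))"
      if "i \<in> I" for i
    proof -
      have "(\<integral>\<^sup>+x. ennreal (exp (l * (s * X i x - s * \<mu>))) \<partial>M)
              = (\<integral>\<^sup>+x. ennreal (exp ((l * s) * (X i x - \<mu>))) \<partial>M)"
        by (simp add: right_diff_distrib mult.assoc)
      also have "\<dots> = (\<integral>\<^sup>+x. ennreal (exp ((l * s) * (Y x - \<mu>))) \<partial>M)"
        by (rule nn_integral_comp_eq_if_distr_eq[where f = "\<lambda>y. ennreal (exp ((l * s) * (y - \<mu>)))"])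
           (use that distr_eq in auto)
      also have "\<dots> \<le> ennreal (exp ((l * s)\<^sup>2 * p))"
        unfolding \<mu>_def p_def using l s
        by (intro nn_integral_exp_centered_ternary_le vals) (auto simp: abs_mult)
      also have "(l * s)\<^sup>2 = l\<^sup>2"
        using s by (metis abs_mult_self_eq mult.right_neutral power2_eq_square power_mult_distrib)
      finally show ?thesis .
    qed
    have "prob {x \<in> space M. (\<Sum>i\<in>I. s * X i x - s * \<mu>) \<ge> t} \<le> exp (-l * t + (\<Sum>i\<in>I. l\<^sup>2 * p))"
      by (rule Chernoff_ineq_indep_sum_ge[OF \<open>finite I\<close> indep_s \<open>0 < l\<close> mgf])
    then show ?thesis by (simp add: n_def mult.assoc)
  qed
  have "{x \<in> space M. \<bar>(\<Sum>i\<in>I. X i x) - n * \<mu>\<bar> \<ge> t}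
          \<subseteq> {x \<in> space M. (\<Sum>i\<in>I. 1 * X i x - 1 * \<mu>) \<ge> t}
            \<union> {x \<in> space M. (\<Sum>i\<in>I. -1 * X i x - -1 * \<mu>) \<ge> t}"
    by (auto simp: n_def sum_subtractf sum_negf abs_if)
  then have "prob {x \<in> space M. \<bar>(\<Sum>i\<in>I. X i x) - n * \<mu>\<bar> \<ge> t}
               \<le> prob {x \<in> space M. (\<Sum>i\<in>I. 1 * X i x - 1 * \<mu>) \<ge> t}
                 + prob {x \<in> space M. (\<Sum>i\<in>I. -1 * X i x - -1 * \<mu>) \<ge> t}"
    using \<open>finite I\<close> by (intro order_trans[OF finite_measure_mono measure_Un_le]) auto
  also have "\<dots> \<le> 2 * exp (-l * t + n * l\<^sup>2 * p)"
    using tail[of 1] tail[of "-1"] by simp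
  also have "-l * t + n * l\<^sup>2 * p = - t\<^sup>2 / (4 * n * p)"
    using \<open>n * p > 0\<close> by (simp add: l_def field_simps power2_eq_square)
  finally show ?thesis by (simp add: \<mu>_def p_def n_def)
qed

lemma (in prob_space) prob_relative_mean_dev_iid_ternary_ge_le:
  fixes \<epsilon> :: real
  assumes "finite I" "I \<noteq> {}" and indep: "indep_vars (\<lambda>_. borel) X I"
    and [measurable]: "random_variable borel Y"
    and distr_eq: "\<And>i. i \<in> I \<Longrightarrow> distr M borel (X i) = distr M borel Y"
    and vals: "\<And>x. x \<in> space M \<Longrightarrow> Y x \<in> {-1, 0, 1}"
    and "expectation Y \<noteq> 0" "0 < \<epsilon>" "\<epsilon> * \<bar>expectation Y\<bar> \<le> 2 * prob {x \<in> space M. Y x \<noteq> 0}"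
  shows "prob {x \<in> space M. \<bar>(\<Sum>i\<in>I. X i x) / (real (card I) * \<bar>expectation Y\<bar>)
                               - expectation Y / \<bar>expectation Y\<bar>\<bar> \<ge> \<epsilon>}
           \<le> 2 * exp (- (real (card I) * \<epsilon>\<^sup>2 * \<bar>expectation Y\<bar>\<^sup>2) / (4 * prob {x \<in> space M. Y x \<noteq> 0}))"
proof -
  define \<mu> where "\<mu> = expectation Y"
  define p where "p = prob {x \<in> space M. Y x \<noteq> 0}"
  define n where "n = real (card I)"
  have "n > 0" using assms(1,2) by (simp add: n_def card_gt_0_iff)
  have "(\<Sum>i\<in>I. X i x) / (n * \<bar>\<mu>\<bar>) - \<mu> / \<bar>\<mu>\<bar> = ((\<Sum>i\<in>I. X i x) - n * \<mu>) / (n * \<bar>\<mu>\<bar>)" for x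
    using \<open>n > 0\<close> assms(7) by (simp add: \<mu>_def diff_divide_distrib)
  then have "prob {x \<in> space M. \<bar>(\<Sum>i\<in>I. X i x) / (n * \<bar>\<mu>\<bar>) - \<mu> / \<bar>\<mu>\<bar>\<bar> \<ge> \<epsilon>}
               = prob {x \<in> space M. \<bar>(\<Sum>i\<in>I. X i x) - n * \<mu>\<bar> \<ge> \<epsilon> * n * \<bar>\<mu>\<bar>}"
    using \<open>n > 0\<close> assms(7) by (simp add: \<mu>_def abs_divide abs_mult le_divide_eq mult_ac)
  also have "\<dots> \<le> 2 * exp (- (\<epsilon> * n * \<bar>\<mu>\<bar>)\<^sup>2 / (4 * n * p))"
  proof -
    have "0 < \<epsilon> * n * \<bar>\<mu>\<bar>" using \<open>n > 0\<close> assms(7,8) by (simp add: \<mu>_def)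
    moreover have "\<epsilon> * n * \<bar>\<mu>\<bar> \<le> 2 * n * p"
      using mult_left_mono[OF assms(9), of n] \<open>n > 0\<close> by (simp add: \<mu>_def p_def mult_ac)
    ultimately show ?thesis unfolding n_def \<mu>_def p_def
      by (intro prob_abs_sum_iid_ternary_dev_ge_le assms(1,4) indep distr_eq vals)
  qed
  also have "\<dots> = 2 * exp (- (n * \<epsilon>\<^sup>2 * \<bar>\<mu>\<bar>\<^sup>2) / (4 * p))"
    using \<open>n > 0\<close> by (simp add: power2_eq_square)
  finally show ?thesis by (simp add: \<mu>_def p_def n_def)
qed

theorem lemma7:
  fixes M :: "'a measure" and X :: "nat \<Rightarrow> 'a \<Rightarrow> real" and q :: nat and \<epsilon> :: real
  assumes "prob_space M"
    and "q \<ge> 1"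
    and "prob_space.indep_vars M (\<lambda>_. borel) X {1..q}"
    and "\<And>i. i \<in> {1..q} \<Longrightarrow> X i \<in> borel_measurable M"
    and "\<And>i \<omega>. i \<in> {1..q} \<Longrightarrow> \<omega> \<in> space M \<Longrightarrow> X i \<omega> \<in> {-1, 0, 1}"
    and "\<And>i. i \<in> {1..q} \<Longrightarrow> distr M borel (X i) = distr M borel (X 1)"
    and "integral\<^sup>L M (X 1) \<noteq> 0"
    and "0 < \<epsilon>"
    and "\<epsilon> \<le> min (measure M {\<omega> \<in> space M. X 1 \<omega> = 1}) (measure M {\<omega> \<in> space M. X 1 \<omega> = -1})
              / (2 * \<bar>integral\<^sup>L M (X 1)\<bar>)"
  shows "measure M {\<omega> \<in> space M.
            \<bar>(\<Sum>i=1..q. X i \<omega>) / (real q * \<bar>integral\<^sup>L M (X 1)\<bar>)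
              - integral\<^sup>L M (X 1) / \<bar>integral\<^sup>L M (X 1)\<bar>\<bar> \<ge> \<epsilon>}
         \<le> 4 * exp (- (real q * \<epsilon>\<^sup>2 * \<bar>integral\<^sup>L M (X 1)\<bar>\<^sup>2)
                      / (12 * measure M {\<omega> \<in> space M. X 1 \<omega> \<noteq> 0}))"
proof -
  interpret prob_space M by fact
  define \<mu> where "\<mu> = expectation (X 1)"
  define p where "p = prob {\<omega> \<in> space M. X 1 \<omega> \<noteq> 0}"
  have rv [measurable]: "random_variable borel (X 1)" using assms(2,4) by simp
  have vals: "X 1 \<omega> \<in> {-1, 0, 1}" if "\<omega> \<in> space M" for \<omega> using assms(2,5) that by simp
  have "\<epsilon> * (2 * \<bar>\<mu>\<bar>) \<le> prob {\<omega> \<in> space M. X 1 \<omega> = 1}"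
    using assms(7,9) by (simp add: \<mu>_def le_divide_eq)
  also have "\<dots> \<le> p"
    unfolding p_def by (intro finite_measure_mono) (fastforce, measurable)
  finally have "\<epsilon> * \<bar>\<mu>\<bar> \<le> p / 2" by simp
  moreover have "0 < \<epsilon> * \<bar>\<mu>\<bar>" using assms(7,8) by (simp add: \<mu>_def)
  ultimately have "0 < p" and "\<epsilon> * \<bar>\<mu>\<bar> \<le> 2 * p" by linarith+
  then have "prob {\<omega> \<in> space M. \<bar>(\<Sum>i=1..q. X i \<omega>) / (card {1..q} * \<bar>\<mu>\<bar>) - \<mu> / \<bar>\<mu>\<bar>\<bar> \<ge> \<epsilon>}
               \<le> 2 * exp (- (card {1..q} * \<epsilon>\<^sup>2 * \<bar>\<mu>\<bar>\<^sup>2) / (4 * p))"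
    unfolding \<mu>_def p_def using assms(2,7,8) rv
    by (intro prob_relative_mean_dev_iid_ternary_ge_le assms(3,6) vals) auto
  then have "prob {\<omega> \<in> space M. \<bar>(\<Sum>i=1..q. X i \<omega>) / (q * \<bar>\<mu>\<bar>) - \<mu> / \<bar>\<mu>\<bar>\<bar> \<ge> \<epsilon>}
               \<le> 2 * exp (- (q * \<epsilon>\<^sup>2 * \<bar>\<mu>\<bar>\<^sup>2) / (4 * p))"
    by simp
  also have "\<dots> \<le> 4 * exp (- (q * \<epsilon>\<^sup>2 * \<bar>\<mu>\<bar>\<^sup>2) / (12 * p))"
  proof -
    have "q * \<epsilon>\<^sup>2 * \<bar>\<mu>\<bar>\<^sup>2 / (12 * p) \<le> q * \<epsilon>\<^sup>2 * \<bar>\<mu>\<bar>\<^sup>2 / (4 * p)"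
      using \<open>0 < p\<close> by (intro divide_left_mono) auto
    then have "exp (- (q * \<epsilon>\<^sup>2 * \<bar>\<mu>\<bar>\<^sup>2) / (4 * p)) \<le> exp (- (q * \<epsilon>\<^sup>2 * \<bar>\<mu>\<bar>\<^sup>2) / (12 * p))"
      by simp
    then show ?thesis using exp_gt_zero[of "- (q * \<epsilon>\<^sup>2 * \<bar>\<mu>\<bar>\<^sup>2) / (12 * p)"] by linarith
  qed
  finally show ?thesis unfolding \<mu>_def p_def .
qed

end
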